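(* If degree sequences $e$ and $d$ satisfy $e\preccurlyeq d$ in the Rao order, then $\Delta^*(e)\le \Delta^*(d)$.
   Context: Degree sequences (of finite simple graphs with at least one vertex) are listed in nonincreasing order. For such $d$, $m(d)=\max\{i : d_i\ge i-1\}$ and, for integers $k\ge 0$, $\Delta_k(d)=k(k-1)+\sum_{i>k}\min\{k,d_i\}-\sum_{i\le k}d_i$; $\Delta^*(d)=\max\{\Delta_k(d):1\le k\le m(d)\}$. Rao order: $e\preccurlyeq d$ if there exist a realization $H$ of $e$ and a realization $G$ of $d$ such that $H$ is an induced subgraph of $G$. *)

theory Defs
  imports Main
begin

text \<open>E realizes the list d (of length n) if vertex i has degree d!i (vertex i corresponds to d_(i+1)).\<close>

definition realizes :: "(nat \<Rightarrow> nat \<Rightarrow> bool) \<Rightarrow> nat list \<Rightarrow> bool" where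
  "realizes E d \<longleftrightarrow>
     (\<forall>i j. E i j \<longrightarrow> i < length d \<and> j < length d) \<and>
     (\<forall>i j. E i j \<longrightarrow> E j i) \<and>
     (\<forall>i. \<not> E i i) \<and>
     (\<forall>i < length d. card {j. E i j} = d ! i)"

definition degree_seq :: "nat list \<Rightarrow> bool" where
  "degree_seq d \<longleftrightarrow> d \<noteq> [] \<and> sorted_wrt (\<ge>) d \<and> (\<exists>E. realizes E d)"

text \<open>1-indexed access: dd d i = d_i.\<close>
definition dd :: "nat list \<Rightarrow> nat \<Rightarrow> nat" where
  "dd d i = d ! (i - 1)"

definition m_index :: "nat list \<Rightarrow> nat" where
  "m_index d = Max {i \<in> {1..length d}. int (dd d i) \<ge> int i - 1}"

definition Delta :: "nat list \<Rightarrow> nat \<Rightarrow> int" where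
  "Delta d k = int k * (int k - 1)
     + (\<Sum>i\<in>{k+1..length d}. min (int k) (int (dd d i)))
     - (\<Sum>i\<in>{1..k}. int (dd d i))"

definition Delta_star :: "nat list \<Rightarrow> int" where
  "Delta_star d = Max ((\<lambda>k. Delta d k) ` {1..m_index d})"

text \<open>Rao order: some realization of e is (isomorphic to) an induced subgraph of some realization of d.\<close>
definition rao_le :: "nat list \<Rightarrow> nat list \<Rightarrow> bool" where
  "rao_le e d \<longleftrightarrow> (\<exists>H G f. realizes H e \<and> realizes G d \<and>
      inj_on f {..<length e} \<and> f ` {..<length e} \<subseteq> {..<length d} \<and>
      (\<forall>i < length e. \<forall>j < length e. H i j \<longleftrightarrow> G (f i) (f j)))"

end

theory Submission
  imports Defs
begin

text \<open>
  For a graph E on a finite vertex set X and a set T of k vertices of largest degree,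
  Delta_on E X T is Delta_k of the degree sequence of the graph, and T is admissible exactly when
  1 \<le> k \<le> m. So Delta_star of a degree sequence is the largest value of Delta_on over the
  admissible sets of any realization. If H is an induced subgraph of G, add the vertices of G
  outside H one at a time. When a vertex w is added, an admissible set S, chosen to be a top set
  both before and after adding w, yields an admissible set of the larger graph with at least the
  same Delta_on: S itself if no member of S has smaller degree than w; S together with w if all
  members of S have degree at least |S|; and otherwise S with a member of degree |S| - 1, which is
  then not adjacent to w, exchanged for w.
\<close>

definition top_set :: "('a \<Rightarrow> nat) \<Rightarrow> 'a set \<Rightarrow> 'a set \<Rightarrow> bool" where
  "top_set f X T \<longleftrightarrow> T \<subseteq> X \<and> (\<forall>a\<in>T. \<forall>b\<in>X - T. f b \<le> f a)"

lemma top_set_exists: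
  assumes "finite X" "k \<le> card X"
  shows "\<exists>T. top_set f X T \<and> card T = k"
  using assms(2)
proof (induction k)
  case 0
  show ?case by (rule exI[of _ "{}"]) (simp add: top_set_def)
next
  case (Suc k)
  then obtain T where T: "top_set f X T" "card T = k" by auto
  then have "T \<subseteq> X" "finite T" using assms(1) by (auto simp: top_set_def intro: finite_subset)
  have "X - T \<noteq> {}" using Suc.prems T(2) card_mono[OF \<open>finite T\<close>] by (metis Diff_eq_empty_iff not_less_eq_eq)
  then have "Max (f ` (X - T)) \<in> f ` (X - T)" using assms(1) by (intro Max_in) auto
  then obtain m where m: "m \<in> X - T" "f m = Max (f ` (X - T))" by auto
  then have max: "\<forall>b\<in>X - T. f b \<le> f m" using assms(1) by simp
  show ?case
  proof (intro exI conjI)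
    show "top_set f X (insert m T)" using T(1) m(1) max by (auto simp: top_set_def)
    show "card (insert m T) = Suc k" using m T(2) \<open>finite T\<close> by simp
  qed
qed

lemma top_set_diff_values_eq:
  assumes "top_set f X S" "top_set f X T" "a \<in> S - T" "b \<in> T - S"
  shows "f a = f b"
  using assms unfolding top_set_def by (meson Diff_iff le_antisym subsetD)

lemma card_diff_eq_if_card_eq:
  assumes "finite S" "finite T" "card S = card T"
  shows "card (S - T) = card (T - S)"
  using assms by (metis card_Diff_subset_Int finite_Int inf_commute)

lemma top_set_swap:
  assumes "finite X" "top_set f X S" "top_set f X T" "card S = card T" "a \<in> S - T"
  shows "\<exists>b\<in>T - S. f b = f a"
proof -
  have "finite S" "finite T" using assms(1-3) by (auto simp: top_set_def intro: finite_subset)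
  then have "card (T - S) \<noteq> 0"
    using assms(4,5) card_diff_eq_if_card_eq by (metis card_0_eq empty_iff finite_Diff)
  then obtain b where "b \<in> T - S" by (metis card.empty ex_in_conv)
  then show ?thesis using top_set_diff_values_eq[OF assms(2,3,5)] by metis
qed

lemma top_set_sum_eq:
  fixes h :: "nat \<Rightarrow> 'b::semiring_1"
  assumes "finite X" "top_set f X S" "top_set f X T" "card S = card T"
  shows "(\<Sum>v\<in>S. h (f v)) = (\<Sum>v\<in>T. h (f v))"
proof -
  have fin: "finite S" "finite T" using assms(1-3) by (auto simp: top_set_def intro: finite_subset)
  have diff: "(\<Sum>v\<in>S - T. h (f v)) = (\<Sum>v\<in>T - S. h (f v))"
  proof (cases "S - T = {}")
    case True
    moreover have "T - S = {}"
      using True card_diff_eq_if_card_eq[OF fin assms(4)] fin by (metis card.empty card_0_eq finite_Diff)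
    ultimately show ?thesis by simp
  next
    case False
    then obtain a where a: "a \<in> S - T" by blast
    then obtain b where b: "b \<in> T - S" "f b = f a" using top_set_swap[OF assms] by blast
    have "(\<Sum>v\<in>S - T. h (f v)) = (\<Sum>v\<in>S - T. h (f a))"
      using top_set_diff_values_eq[OF assms(2,3) _ b(1)] b(2) by (intro sum.cong) auto
    also have "\<dots> = (\<Sum>v\<in>T - S. h (f a))"
      using card_diff_eq_if_card_eq[OF fin assms(4)] by simp
    also have "\<dots> = (\<Sum>v\<in>T - S. h (f v))"
      using top_set_diff_values_eq[OF assms(2,3) a] by (intro sum.cong) auto
    finally show ?thesis .
  qed
  have "(\<Sum>v\<in>S. h (f v)) = (\<Sum>v\<in>S \<inter> T. h (f v)) + (\<Sum>v\<in>S - T. h (f v))"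
    by (rule sum.Int_Diff[OF fin(1)])
  also have "\<dots> = (\<Sum>v\<in>T \<inter> S. h (f v)) + (\<Sum>v\<in>T - S. h (f v))"
    by (simp only: diff Int_commute)
  also have "\<dots> = (\<Sum>v\<in>T. h (f v))"
    by (rule sum.Int_Diff[OF fin(2), symmetric])
  finally show ?thesis .
qed

lemma top_set_if_monotone:
  assumes "top_set f X T" "\<And>a b. f b \<le> f a \<Longrightarrow> g b \<le> g a"
  shows "top_set g X T"
  using assms by (auto simp: top_set_def)

definition degree_in :: "('a \<Rightarrow> 'a \<Rightarrow> bool) \<Rightarrow> 'a set \<Rightarrow> 'a \<Rightarrow> nat" where
  "degree_in E X v = card {u\<in>X. E v u}"

definition Delta_on :: "('a \<Rightarrow> 'a \<Rightarrow> bool) \<Rightarrow> 'a set \<Rightarrow> 'a set \<Rightarrow> int" where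
  "Delta_on E X T = int (card T) * (int (card T) - 1)
     + (\<Sum>v\<in>X - T. min (int (card T)) (int (degree_in E X v))) - (\<Sum>v\<in>T. int (degree_in E X v))"

definition admissible :: "('a \<Rightarrow> 'a \<Rightarrow> bool) \<Rightarrow> 'a set \<Rightarrow> 'a set \<Rightarrow> bool" where
  "admissible E X T \<longleftrightarrow>
     top_set (degree_in E X) X T \<and> T \<noteq> {} \<and> (\<forall>a\<in>T. card T \<le> degree_in E X a + 1)"

lemma Delta_on_low_outside:
  assumes "\<forall>v\<in>X - T. degree_in E X v \<le> card T"
  shows "Delta_on E X T = int (card T) * (int (card T) - 1)
    + (\<Sum>v\<in>X - T. int (degree_in E X v)) - (\<Sum>v\<in>T. int (degree_in E X v))"
proof -
  have "(\<Sum>v\<in>X - T. min (int (card T)) (int (degree_in E X v))) = (\<Sum>v\<in>X - T. int (degree_in E X v))"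
    using assms by (intro sum.cong refl min_absorb2) simp_all
  then show ?thesis by (simp add: Delta_on_def)
qed

lemma Delta_on_top_set_eq:
  assumes "finite X" "top_set (degree_in E X) X S" "top_set (degree_in E X) X T" "card S = card T"
  shows "Delta_on E X S = Delta_on E X T"
proof -
  have sub: "S \<subseteq> X" "T \<subseteq> X" using assms(2,3) by (auto simp: top_set_def)
  let ?min = "\<lambda>n. min (int (card S)) (int n)"
  have "(\<Sum>v\<in>S. ?min (degree_in E X v)) = (\<Sum>v\<in>T. ?min (degree_in E X v))"
    "(\<Sum>v\<in>S. int (degree_in E X v)) = (\<Sum>v\<in>T. int (degree_in E X v))"
    by (rule top_set_sum_eq[OF assms])+
  then show ?thesis using assms(1,4) sub by (simp add: Delta_on_def sum_diff)
qed

lemma admissible_top_set_eq: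
  assumes "finite X" "admissible E X S" "top_set (degree_in E X) X T" "card T = card S"
  shows "admissible E X T \<and> Delta_on E X T = Delta_on E X S"
proof
  have S: "top_set (degree_in E X) X S" "S \<noteq> {}" "\<forall>a\<in>S. card S \<le> degree_in E X a + 1"
    using assms(2) by (auto simp: admissible_def)
  have "card S \<le> degree_in E X a + 1" if a: "a \<in> T" for a
  proof (cases "a \<in> S")
    case False
    then obtain b where "b \<in> S - T" "degree_in E X b = degree_in E X a"
      using top_set_swap[OF assms(1,3) S(1) assms(4)] a by blast
    then show ?thesis using S(3) by fastforce
  qed (use S(3) in blast)
  moreover have "T \<noteq> {}"
  proof -
    have "finite S" using S(1) assms(1) by (auto simp: top_set_def intro: finite_subset)
    then show ?thesis using S(2) assms(4) by auto
  qed
  ultimately show "admissible E X T" using assms(3,4) by (simp add: admissible_def)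
  show "Delta_on E X T = Delta_on E X S"
    using Delta_on_top_set_eq[OF assms(1,3) S(1) assms(4)] .
qed

lemma degree_in_insert:
  assumes "finite X" "w \<notin> X"
  shows "degree_in E (insert w X) v = degree_in E X v + of_bool (E v w)"
proof -
  have "{u\<in>insert w X. E v u} = (if E v w then insert w {u\<in>X. E v u} else {u\<in>X. E v u})"
    by auto
  then show ?thesis using assms by (simp add: degree_in_def)
qed

lemma degree_in_le_card: "finite X \<Longrightarrow> degree_in E X v \<le> card X"
  unfolding degree_in_def by (rule card_mono) auto

lemma degree_in_mono: "finite Y \<Longrightarrow> X \<subseteq> Y \<Longrightarrow> degree_in E X v \<le> degree_in E Y v"
  unfolding degree_in_def by (rule card_mono) auto

lemma degree_in_split:
  assumes "finite X" "A \<subseteq> X"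
  shows "degree_in E X v = degree_in E A v + degree_in E (X - A) v"
proof -
  have "{u\<in>X. E v u} = {u\<in>A. E v u} \<union> {u\<in>X - A. E v u}" using assms(2) by auto
  then show ?thesis
    using assms by (simp add: degree_in_def card_Un_disjoint[symmetric] finite_subset Int_def)
qed

lemma sum_degree_in_insert:
  assumes "finite X" "w \<notin> X" "A \<subseteq> X" "symp E"
  shows "(\<Sum>v\<in>A. int (degree_in E (insert w X) v))
    = (\<Sum>v\<in>A. int (degree_in E X v)) + int (degree_in E A w)"
proof -
  have "finite A" using assms(1,3) by (rule finite_subset[rotated])
  have "(\<Sum>v\<in>A. int (degree_in E (insert w X) v))
      = (\<Sum>v\<in>A. int (degree_in E X v) + of_bool (E v w))"
    by (simp add: degree_in_insert[OF assms(1,2)])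
  also have "\<dots> = (\<Sum>v\<in>A. int (degree_in E X v)) + int (card (A \<inter> {v. E v w}))"
    using \<open>finite A\<close> by (simp add: sum.distrib)
  also have "A \<inter> {v. E v w} = {u\<in>A. E w u}" using assms(4) by (auto dest: sympD)
  finally show ?thesis by (simp add: degree_in_def)
qed

locale vertex_insertion =
  fixes E :: "'a \<Rightarrow> 'a \<Rightarrow> bool" and U :: "'a set" and w :: 'a
  assumes finite: "finite U" and fresh: "w \<notin> U" and sym: "symp E" and irrefl: "irreflp E"
begin

lemma degree_in_insert_ge: "degree_in E U v \<le> degree_in E (insert w U) v"
  by (simp add: degree_in_insert[OF finite fresh])

lemma degree_in_new_vertex: "degree_in E (insert w U) w = degree_in E U w"
  using irrefl unfolding degree_in_def irreflp_def by (metis insert_iff)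

lemma Delta_on_insert_outside:
  assumes "S \<subseteq> U"
  shows "Delta_on E U S \<le> Delta_on E (insert w U) S"
proof -
  let ?X = "insert w U" and ?k = "int (card S)"
  have "finite S" using finite assms by (rule finite_subset[rotated])
  have "?X - S = insert w (U - S)" "w \<notin> U - S" using assms fresh by auto
  then have outside: "(\<Sum>v\<in>?X - S. min ?k (int (degree_in E ?X v)))
      = min ?k (int (degree_in E ?X w)) + (\<Sum>v\<in>U - S. min ?k (int (degree_in E ?X v)))"
    using finite by simp
  have old_outside: "(\<Sum>v\<in>U - S. min ?k (int (degree_in E U v)))
      \<le> (\<Sum>v\<in>U - S. min ?k (int (degree_in E ?X v)))"
    by (intro sum_mono min.mono) (simp_all add: degree_in_insert_ge)
  have inside: "(\<Sum>v\<in>S. int (degree_in E ?X v))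
      = (\<Sum>v\<in>S. int (degree_in E U v)) + int (degree_in E S w)"
    by (rule sum_degree_in_insert[OF finite fresh assms sym])
  have "degree_in E S w \<le> card S" using \<open>finite S\<close> by (rule degree_in_le_card)
  moreover have "degree_in E S w \<le> degree_in E ?X w"
    using degree_in_mono[OF finite assms] degree_in_new_vertex by simp
  ultimately have "int (degree_in E S w) \<le> min ?k (int (degree_in E ?X w))" by simp
  then show ?thesis using outside old_outside inside unfolding Delta_on_def by linarith
qed

lemma Delta_on_insert_inside:
  assumes "S \<subseteq> U"
  shows "Delta_on E U S \<le> Delta_on E (insert w U) (insert w S)"
proof -
  let ?X = "insert w U" and ?k = "int (card S)"
  have "finite S" using finite assms by (rule finite_subset[rotated])
  have "w \<notin> S" using assms fresh by auto
  have card: "int (card (insert w S)) = ?k + 1" using \<open>finite S\<close> \<open>w \<notin> S\<close> by simp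
  have outside_set: "?X - insert w S = U - S" using fresh by auto
  have "(\<Sum>v\<in>U - S. min ?k (int (degree_in E U v)) - int (degree_in E U v))
      \<le> (\<Sum>v\<in>U - S. min (?k + 1) (int (degree_in E ?X v)) - int (degree_in E ?X v))"
    by (intro sum_mono) (simp add: degree_in_insert[OF finite fresh] min_def)
  then have outside: "(\<Sum>v\<in>U - S. min ?k (int (degree_in E U v))) - (\<Sum>v\<in>U - S. int (degree_in E U v))
      \<le> (\<Sum>v\<in>U - S. min (?k + 1) (int (degree_in E ?X v))) - (\<Sum>v\<in>U - S. int (degree_in E ?X v))"
    by (simp add: sum_subtractf)
  have outside_degrees: "(\<Sum>v\<in>U - S. int (degree_in E ?X v))
      = (\<Sum>v\<in>U - S. int (degree_in E U v)) + int (degree_in E (U - S) w)"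
    by (rule sum_degree_in_insert[OF finite fresh _ sym]) blast
  have inside: "(\<Sum>v\<in>insert w S. int (degree_in E ?X v))
      = int (degree_in E U w) + (\<Sum>v\<in>S. int (degree_in E U v)) + int (degree_in E S w)"
    using sum_degree_in_insert[OF finite fresh assms sym] \<open>finite S\<close> \<open>w \<notin> S\<close>
    by (simp add: degree_in_new_vertex)
  have split: "int (degree_in E U w) = int (degree_in E S w) + int (degree_in E (U - S) w)"
    using degree_in_split[OF finite assms] by simp
  have "int (degree_in E S w) \<le> ?k" using degree_in_le_card[OF \<open>finite S\<close>] by simp
  moreover have "Delta_on E ?X (insert w S) = (?k + 1) * (?k + 1 - 1)
      + (\<Sum>v\<in>U - S. min (?k + 1) (int (degree_in E ?X v)))
      - (\<Sum>v\<in>insert w S. int (degree_in E ?X v))"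
    unfolding Delta_on_def card outside_set by (rule refl)
  moreover have "(?k + 1) * (?k + 1 - 1) = ?k * (?k - 1) + 2 * ?k" by (simp add: algebra_simps)
  ultimately show ?thesis
    using outside[unfolded outside_degrees] inside split unfolding Delta_on_def[of E U S] by linarith
qed

lemma Delta_on_insert_exchange:
  assumes "R \<subseteq> U" "a \<in> U - R" "\<not> E a w" "degree_in E U a = card R"
    and small: "\<forall>b\<in>insert w U - insert w R. degree_in E (insert w U) b \<le> card R"
  shows "Delta_on E U (insert a R) \<le> Delta_on E (insert w U) (insert w R)"
proof -
  let ?X = "insert w U" and ?O = "U - insert a R" and ?k = "int (card R) + 1"
  have "finite R" using finite assms(1) by (rule finite_subset[rotated])
  have "w \<notin> R" "w \<noteq> a" "a \<notin> R" using assms(1,2) fresh by auto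
  have card: "card (insert a R) = card R + 1" "card (insert w R) = card R + 1"
    using \<open>finite R\<close> \<open>w \<notin> R\<close> \<open>a \<notin> R\<close> by simp_all
  have "\<forall>v\<in>?O. degree_in E U v \<le> card (insert a R)"
  proof
    fix v assume "v \<in> ?O"
    then have "v \<in> ?X - insert w R" using fresh by auto
    then have "degree_in E ?X v \<le> card R" using small by blast
    then show "degree_in E U v \<le> card (insert a R)" using degree_in_insert_ge[of v] card(1) by simp
  qed
  then have lhs: "Delta_on E U (insert a R) = ?k * (?k - 1)
      + (\<Sum>v\<in>?O. int (degree_in E U v)) - (int (card R) + (\<Sum>v\<in>R. int (degree_in E U v)))"
    using Delta_on_low_outside[of U "insert a R" E] \<open>finite R\<close> \<open>a \<notin> R\<close> assms(4) card(1) by simp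
  have "\<forall>v\<in>?X - insert w R. degree_in E ?X v \<le> card (insert w R)"
    using small card(2) by (auto intro: le_SucI)
  then have rhs: "Delta_on E ?X (insert w R) = ?k * (?k - 1)
      + (\<Sum>v\<in>?X - insert w R. int (degree_in E ?X v)) - (\<Sum>v\<in>insert w R. int (degree_in E ?X v))"
    using Delta_on_low_outside[of ?X "insert w R" E] card(2) by simp
  have "degree_in E ?X a = card R" using assms(3,4) by (simp add: degree_in_insert[OF finite fresh])
  moreover have "(\<Sum>v\<in>?O. int (degree_in E ?X v))
      = (\<Sum>v\<in>?O. int (degree_in E U v)) + int (degree_in E ?O w)"
    by (rule sum_degree_in_insert[OF finite fresh _ sym]) blast
  moreover have "?X - insert w R = insert a ?O" using assms(1,2) fresh \<open>w \<noteq> a\<close> by auto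
  ultimately have outside: "(\<Sum>v\<in>?X - insert w R. int (degree_in E ?X v))
      = int (card R) + (\<Sum>v\<in>?O. int (degree_in E U v)) + int (degree_in E ?O w)"
    using finite by simp
  have inside: "(\<Sum>v\<in>insert w R. int (degree_in E ?X v))
      = int (degree_in E U w) + (\<Sum>v\<in>R. int (degree_in E U v)) + int (degree_in E R w)"
    using sum_degree_in_insert[OF finite fresh assms(1) sym] \<open>finite R\<close> \<open>w \<notin> R\<close>
    by (simp add: degree_in_new_vertex)
  have "\<not> E w a" using assms(3) sym by (auto dest: sympD)
  then have "degree_in E (insert a R) w = degree_in E R w"
    using degree_in_insert[OF \<open>finite R\<close> \<open>a \<notin> R\<close>] by simp
  then have split: "int (degree_in E U w) = int (degree_in E R w) + int (degree_in E ?O w)"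
    using degree_in_split[OF finite, of "insert a R" E w] assms(1,2) by simp
  have "int (degree_in E R w) \<le> int (card R)" using degree_in_le_card[OF \<open>finite R\<close>] by simp
  then show ?thesis unfolding lhs rhs outside inside split by simp
qed

lemma admissible_degree_lower:
  assumes "admissible E U S" "a \<in> S"
  shows "card S \<le> degree_in E (insert w U) a + 1"
  using assms degree_in_insert_ge[of a] by (auto simp: admissible_def)

lemma admissible_insert_keep:
  assumes adm: "admissible E U S" and top: "top_set (degree_in E (insert w U)) U S"
    and low: "\<forall>a\<in>S. degree_in E (insert w U) w \<le> degree_in E (insert w U) a"
  shows "admissible E (insert w U) S \<and> Delta_on E U S \<le> Delta_on E (insert w U) S"
proof
  have "S \<subseteq> U" "S \<noteq> {}" using adm by (auto simp: admissible_def top_set_def)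
  with top low show "admissible E (insert w U) S"
    using admissible_degree_lower[OF adm] by (auto simp: admissible_def top_set_def)
  show "Delta_on E U S \<le> Delta_on E (insert w U) S"
    using \<open>S \<subseteq> U\<close> by (rule Delta_on_insert_outside)
qed

lemma admissible_insert_add:
  assumes adm: "admissible E U S" and top: "top_set (degree_in E (insert w U)) U S"
    and a0: "a0 \<in> S" "degree_in E (insert w U) a0 < degree_in E (insert w U) w"
    and high: "\<forall>a\<in>S. card S \<le> degree_in E (insert w U) a"
  shows "admissible E (insert w U) (insert w S)
    \<and> Delta_on E U S \<le> Delta_on E (insert w U) (insert w S)"
proof
  let ?d = "degree_in E (insert w U)"
  have "S \<subseteq> U" using adm by (auto simp: admissible_def top_set_def)
  then have "finite S" "w \<notin> S" using finite fresh by (auto intro: finite_subset)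
  then have card: "card (insert w S) = card S + 1" by simp
  have "?d b \<le> ?d a" if "a \<in> insert w S" "b \<in> insert w U - insert w S" for a b
  proof -
    have "b \<in> U - S" using that(2) by blast
    then have "?d b \<le> ?d a0" using top a0(1) by (auto simp: top_set_def)
    then show ?thesis using that(1) top \<open>b \<in> U - S\<close> a0(2) by (auto simp: top_set_def)
  qed
  moreover have "card (insert w S) \<le> ?d a + 1" if "a \<in> insert w S" for a
    using that high a0 card by force
  ultimately show "admissible E (insert w U) (insert w S)"
    using \<open>S \<subseteq> U\<close> by (auto simp: admissible_def top_set_def)
  show "Delta_on E U S \<le> Delta_on E (insert w U) (insert w S)"
    using \<open>S \<subseteq> U\<close> by (rule Delta_on_insert_inside)
qed

lemma admissible_member_below_card:
  assumes "admissible E U S" "a \<in> S" "degree_in E (insert w U) a < card S"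
  shows "\<not> E a w" "degree_in E U a + 1 = card S" "degree_in E (insert w U) a + 1 = card S"
proof -
  have "card S \<le> degree_in E U a + 1" using assms(1,2) by (auto simp: admissible_def)
  then show "\<not> E a w" "degree_in E U a + 1 = card S" "degree_in E (insert w U) a + 1 = card S"
    using assms(3) by (auto simp: degree_in_insert[OF finite fresh])
qed

lemma admissible_insert_exchange:
  assumes adm: "admissible E U S" and top: "top_set (degree_in E (insert w U)) U S"
    and a0: "a0 \<in> S" "degree_in E (insert w U) a0 < degree_in E (insert w U) w"
    and a1: "a1 \<in> S" "degree_in E (insert w U) a1 < card S"
  shows "admissible E (insert w U) (insert w (S - {a1}))
    \<and> Delta_on E U S \<le> Delta_on E (insert w U) (insert w (S - {a1}))"
proof
  let ?d = "degree_in E (insert w U)" and ?R = "S - {a1}"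
  have "S \<subseteq> U" using adm by (auto simp: admissible_def top_set_def)
  then have "finite S" "w \<notin> S" using finite fresh by (auto intro: finite_subset)
  have "card S > 0" using \<open>finite S\<close> a1(1) by (auto simp: card_gt_0_iff)
  then have card_R: "card ?R + 1 = card S" using a1(1) by (simp add: card_Diff_singleton)
  have not_adj: "\<not> E a1 w" and degree_a1: "degree_in E U a1 = card ?R" "?d a1 = card ?R"
    using admissible_member_below_card[OF adm a1] card_R by simp_all
  have outside_low: "?d b \<le> card ?R" if "b \<in> insert w U - insert w ?R" for b
  proof (cases "b = a1")
    case False
    then have "b \<in> U - S" using that by blast
    then show ?thesis using top a1(1) degree_a1(2) by (auto simp: top_set_def)
  qed (use degree_a1 in simp)
  have inside_high: "card ?R \<le> ?d a" if "a \<in> insert w ?R" for a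
  proof (cases "a = w")
    case True
    then show ?thesis using a0 admissible_degree_lower[OF adm a0(1)] card_R by simp
  next
    case False
    then have "a \<in> S" using that by blast
    then show ?thesis using admissible_degree_lower[OF adm] card_R by fastforce
  qed
  have card: "card (insert w ?R) = card S" using \<open>finite S\<close> \<open>w \<notin> S\<close> card_R by simp
  show "admissible E (insert w U) (insert w ?R)"
    unfolding admissible_def top_set_def card
  proof (intro conjI ballI)
    show "insert w ?R \<subseteq> insert w U" using \<open>S \<subseteq> U\<close> by blast
    show "?d b \<le> ?d a" if "a \<in> insert w ?R" "b \<in> insert w U - insert w ?R" for a b
      using outside_low[OF that(2)] inside_high[OF that(1)] by (rule le_trans)
    show "card S \<le> ?d a + 1" if "a \<in> insert w ?R" for a
      using inside_high[OF that] card_R by simp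
  qed simp
  have "?R \<subseteq> U" "a1 \<in> U - ?R" using \<open>S \<subseteq> U\<close> a1(1) by auto
  then have "Delta_on E U (insert a1 ?R) \<le> Delta_on E (insert w U) (insert w ?R)"
    using Delta_on_insert_exchange not_adj degree_a1(1) outside_low by blast
  moreover have "insert a1 ?R = S" using a1(1) by blast
  ultimately show "Delta_on E U S \<le> Delta_on E (insert w U) (insert w ?R)" by simp
qed

lemma admissible_insert_vertex:
  assumes adm: "admissible E U S"
  shows "\<exists>T. admissible E (insert w U) T \<and> Delta_on E U S \<le> Delta_on E (insert w U) T"
proof -
  let ?d = "degree_in E (insert w U)"
  have "card S \<le> card U" using adm finite by (auto simp: admissible_def top_set_def card_mono)
  \<comment> \<open>Ordering by 2 deg v + [v adjacent to w] ranks by degree both before and after adding w.\<close>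
  then obtain S' where S': "top_set (\<lambda>v. 2 * degree_in E U v + of_bool (E v w)) U S'"
      "card S' = card S"
    using top_set_exists[OF finite] by blast
  have "top_set (degree_in E U) U S'"
    using S'(1) by (rule top_set_if_monotone) (auto simp: of_bool_def split: if_splits)
  then have adm': "admissible E U S'" and eq: "Delta_on E U S' = Delta_on E U S"
    using admissible_top_set_eq[OF finite adm _ S'(2)] by auto
  have top': "top_set ?d U S'"
    using S'(1) by (rule top_set_if_monotone) (auto simp: degree_in_insert[OF finite fresh])
  have "\<exists>T. admissible E (insert w U) T \<and> Delta_on E U S' \<le> Delta_on E (insert w U) T"
  proof (cases "\<forall>a\<in>S'. ?d w \<le> ?d a")
    case True
    then show ?thesis using admissible_insert_keep[OF adm' top'] by blast
  next
    case False
    then obtain a0 where a0: "a0 \<in> S'" "?d a0 < ?d w" by (auto simp: not_le)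
    show ?thesis
    proof (cases "\<forall>a\<in>S'. card S' \<le> ?d a")
      case True
      then show ?thesis using admissible_insert_add[OF adm' top' a0] by blast
    next
      case False
      then obtain a1 where "a1 \<in> S'" "?d a1 < card S'" by (auto simp: not_le)
      then show ?thesis using admissible_insert_exchange[OF adm' top' a0] by blast
    qed
  qed
  then show ?thesis using eq by simp
qed

end

lemma admissible_superset:
  assumes "finite U" "finite D" "symp E" "irreflp E" "admissible E U S"
  shows "\<exists>T. admissible E (U \<union> D) T \<and> Delta_on E U S \<le> Delta_on E (U \<union> D) T"
  using assms(2)
proof (induction D rule: finite_induct)
  case empty
  show ?case using assms(5) by auto
next
  case (insert w D)
  then obtain T where T: "admissible E (U \<union> D) T" "Delta_on E U S \<le> Delta_on E (U \<union> D) T"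
    by blast
  show ?case
  proof (cases "w \<in> U \<union> D")
    case True
    then show ?thesis using T by (metis Un_insert_right insert_absorb)
  next
    case False
    then have "vertex_insertion E (U \<union> D) w"
      using assms insert.hyps(1) by unfold_locales auto
    then obtain T' where "admissible E (insert w (U \<union> D)) T'"
        "Delta_on E (U \<union> D) T \<le> Delta_on E (insert w (U \<union> D)) T'"
      using vertex_insertion.admissible_insert_vertex T(1) by metis
    then show ?thesis using T(2) by (intro exI[of _ T']) auto
  qed
qed

lemma sorted_wrt_ge_nth_le:
  fixes xs :: "'a::order list"
  assumes "sorted_wrt (\<ge>) xs" "i \<le> j" "j < length xs"
  shows "xs ! j \<le> xs ! i"
  using assms sorted_wrt_nth_less[OF assms(1), of i j] by (cases "i = j") auto

lemma mem_m_index_iff: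
  assumes "sorted_wrt (\<ge>) d" "d \<noteq> []"
  shows "k \<in> {1..m_index d} \<longleftrightarrow> 1 \<le> k \<and> k \<le> length d \<and> k \<le> d ! (k - 1) + 1"
proof -
  define M where "M = {i \<in> {1..length d}. int (dd d i) \<ge> int i - 1}"
  have "finite M" by (simp add: M_def)
  have "1 \<le> length d" using assms(2) by (simp add: Suc_leI)
  then have "1 \<in> M" by (simp add: M_def)
  then have max: "Max M \<in> M" using \<open>finite M\<close> by (intro Max_in) auto
  have m: "m_index d = Max M" by (simp add: m_index_def M_def)
  show ?thesis
  proof
    assume k: "k \<in> {1..m_index d}"
    have M: "1 \<le> Max M" "Max M \<le> length d" "int (Max M) - 1 \<le> int (d ! (Max M - 1))"
      using max by (auto simp: M_def dd_def)
    have "d ! (Max M - 1) \<le> d ! (k - 1)"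
      using k m M by (intro sorted_wrt_ge_nth_le[OF assms(1)]) auto
    then show "1 \<le> k \<and> k \<le> length d \<and> k \<le> d ! (k - 1) + 1" using k m M by auto
  next
    assume k: "1 \<le> k \<and> k \<le> length d \<and> k \<le> d ! (k - 1) + 1"
    then have "k \<in> M" by (auto simp: M_def dd_def)
    then have "k \<le> Max M" using \<open>finite M\<close> by simp
    then show "k \<in> {1..m_index d}" using k m by simp
  qed
qed

locale degree_labelling =
  fixes E :: "'a \<Rightarrow> 'a \<Rightarrow> bool" and X :: "'a set" and g :: "nat \<Rightarrow> 'a" and d :: "nat list"
  assumes bij: "bij_betw g {..<length d} X"
    and degree: "\<And>i. i < length d \<Longrightarrow> degree_in E X (g i) = d ! i"
    and sorted: "sorted_wrt (\<ge>) d"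
    and nonempty: "d \<noteq> []"
begin

lemma finite_X: "finite X"
  using bij bij_betw_finite by blast

lemma card_prefix:
  assumes "k \<le> length d"
  shows "card (g ` {..<k}) = k"
proof -
  have "inj_on g {..<k}" using bij assms by (auto simp: bij_betw_def intro: inj_on_subset)
  then show ?thesis by (simp add: card_image)
qed

lemma top_set_prefix:
  assumes "k \<le> length d"
  shows "top_set (degree_in E X) X (g ` {..<k})"
  unfolding top_set_def
proof (intro conjI ballI)
  show "g ` {..<k} \<subseteq> X" using bij assms by (auto simp: bij_betw_def)
next
  fix a b assume a: "a \<in> g ` {..<k}" and b: "b \<in> X - g ` {..<k}"
  obtain i where i: "i < k" "a = g i" using a by blast
  obtain j where j: "j < length d" "b = g j" using b bij by (auto simp: bij_betw_def)
  have "\<not> j < k" using b j by auto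
  then show "degree_in E X b \<le> degree_in E X a"
    using i j assms degree[of i] degree[of j] sorted_wrt_ge_nth_le[OF sorted, of i j] by simp
qed

lemma Delta_on_prefix:
  assumes "k \<le> length d"
  shows "Delta_on E X (g ` {..<k}) = Delta d k"
proof -
  let ?n = "length d"
  have inj: "inj_on g {..<?n}" using bij by (simp add: bij_betw_def)
  have inj_suffix: "inj_on g {k..<?n}" by (rule inj_on_subset[OF inj]) auto
  have inj_prefix: "inj_on g {..<k}" by (rule inj_on_subset[OF inj]) (use assms in auto)
  have "X - g ` {..<k} = g ` {..<?n} - g ` {..<k}" using bij by (simp add: bij_betw_def)
  also have "\<dots> = g ` ({..<?n} - {..<k})"
    by (rule inj_on_image_set_diff[OF inj, symmetric]) (use assms in auto)
  also have "{..<?n} - {..<k} = {k..<?n}" by auto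
  finally have outside: "X - g ` {..<k} = g ` {k..<?n}" .
  have "(\<Sum>v\<in>g ` {k..<?n}. min (int k) (int (degree_in E X v)))
      = (\<Sum>j\<in>{k..<?n}. min (int k) (int (d ! j)))"
    using inj_suffix by (simp add: sum.reindex degree)
  also have "\<dots> = (\<Sum>i\<in>{k + 1..?n}. min (int k) (int (dd d i)))"
    by (rule sym, rule sum.reindex_cong[of Suc])
      (simp_all add: dd_def atLeastLessThanSuc_atLeastAtMost[symmetric])
  finally have outside_sum: "(\<Sum>v\<in>g ` {k..<?n}. min (int k) (int (degree_in E X v)))
      = (\<Sum>i\<in>{k + 1..?n}. min (int k) (int (dd d i)))" .
  have "(\<Sum>v\<in>g ` {..<k}. int (degree_in E X v)) = (\<Sum>j<k. int (d ! j))"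
    using inj_prefix assms by (simp add: sum.reindex degree)
  also have "\<dots> = (\<Sum>i\<in>{1..k}. int (dd d i))"
    by (rule sym, rule sum.reindex_cong[of Suc])
      (simp_all add: dd_def atLeast0LessThan[symmetric] atLeastLessThanSuc_atLeastAtMost[symmetric])
  finally show ?thesis
    using outside outside_sum card_prefix[OF assms] by (simp add: Delta_on_def Delta_def)
qed

lemma admissible_prefix_iff:
  assumes "k \<le> length d"
  shows "admissible E X (g ` {..<k}) \<longleftrightarrow> k \<in> {1..m_index d}"
proof
  assume adm: "admissible E X (g ` {..<k})"
  then have "1 \<le> k" by (auto simp: admissible_def)
  then have "k \<le> degree_in E X (g (k - 1)) + 1"
    using adm card_prefix[OF assms] by (auto simp: admissible_def)
  then show "k \<in> {1..m_index d}"
    using \<open>1 \<le> k\<close> assms degree[of "k - 1"] mem_m_index_iff[OF sorted nonempty, of k] by simp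
next
  assume "k \<in> {1..m_index d}"
  then have k: "1 \<le> k" "k \<le> d ! (k - 1) + 1" using mem_m_index_iff[OF sorted nonempty, of k] by auto
  have "k \<le> degree_in E X (g i) + 1" if "i < k" for i
  proof -
    have "d ! (k - 1) \<le> d ! i" using that k(1) assms by (intro sorted_wrt_ge_nth_le[OF sorted]) auto
    then show ?thesis using that k(2) assms degree[of i] by simp
  qed
  then show "admissible E X (g ` {..<k})"
    using top_set_prefix[OF assms] card_prefix[OF assms] k(1) by (auto simp: admissible_def)
qed

lemma Delta_on_admissible_image: "Delta_on E X ` Collect (admissible E X) = Delta d ` {1..m_index d}"
proof (intro equalityI subsetI)
  fix x assume "x \<in> Delta_on E X ` Collect (admissible E X)"
  then obtain T where T: "admissible E X T" "x = Delta_on E X T" by blast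
  let ?k = "card T"
  have "T \<subseteq> X" using T(1) by (simp add: admissible_def top_set_def)
  then have k: "?k \<le> length d" using card_mono[OF finite_X] bij_betw_same_card[OF bij] by simp
  then have "admissible E X (g ` {..<?k}) \<and> Delta_on E X (g ` {..<?k}) = Delta_on E X T"
    using admissible_top_set_eq[OF finite_X T(1) top_set_prefix card_prefix] by blast
  then have "?k \<in> {1..m_index d}" "x = Delta d ?k"
    using admissible_prefix_iff[OF k] Delta_on_prefix[OF k] T(2) by simp_all
  then show "x \<in> Delta d ` {1..m_index d}" by blast
next
  fix x assume "x \<in> Delta d ` {1..m_index d}"
  then obtain k where k: "k \<in> {1..m_index d}" "x = Delta d k" by blast
  then have "k \<le> length d" using mem_m_index_iff[OF sorted nonempty, of k] by blast
  then have "admissible E X (g ` {..<k})" "x = Delta_on E X (g ` {..<k})"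
    using admissible_prefix_iff Delta_on_prefix k by simp_all
  then show "x \<in> Delta_on E X ` Collect (admissible E X)" by blast
qed

lemma Delta_star_attained: "\<exists>T. admissible E X T \<and> Delta_on E X T = Delta_star d"
proof -
  have "1 \<le> length d" using nonempty by (simp add: Suc_leI)
  then have "1 \<in> {1..m_index d}" using mem_m_index_iff[OF sorted nonempty, of 1] by simp
  then have "Delta_star d \<in> Delta d ` {1..m_index d}" unfolding Delta_star_def by (intro Max_in) auto
  then show ?thesis unfolding Delta_on_admissible_image[symmetric] by auto
qed

lemma Delta_on_le_Delta_star:
  assumes "admissible E X T"
  shows "Delta_on E X T \<le> Delta_star d"
proof -
  have "Delta_on E X T \<in> Delta d ` {1..m_index d}"
    using assms Delta_on_admissible_image by blast
  then show ?thesis unfolding Delta_star_def by (intro Max_ge) auto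
qed

end

lemma realizes_degree_in:
  assumes "realizes E d" "i < length d"
  shows "degree_in E {..<length d} i = d ! i"
proof -
  have "{u\<in>{..<length d}. E i u} = {u. E i u}" using assms(1) by (auto simp: realizes_def)
  moreover have "card {u. E i u} = d ! i" using assms unfolding realizes_def by blast
  ultimately show ?thesis by (simp add: degree_in_def)
qed

lemma induced_degree_in:
  assumes "realizes H e" "inj_on f {..<length e}"
    and "\<forall>i < length e. \<forall>j < length e. H i j \<longleftrightarrow> G (f i) (f j)" "i < length e"
  shows "degree_in G (f ` {..<length e}) (f i) = e ! i"
proof -
  have "{u\<in>f ` {..<length e}. G (f i) u} = f ` {j\<in>{..<length e}. H i j}"
    using assms(3,4) by auto
  moreover have "card (f ` {j\<in>{..<length e}. H i j}) = degree_in H {..<length e} i"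
    using assms(2) by (auto simp: degree_in_def intro!: card_image elim: inj_on_subset)
  ultimately show ?thesis using realizes_degree_in[OF assms(1,4)] by (simp add: degree_in_def)
qed

theorem theorem13:
  fixes e d :: "nat list"
  assumes "degree_seq e" and "degree_seq d" and "rao_le e d"
  shows "Delta_star e \<le> Delta_star d"
proof -
  obtain H G f where H: "realizes H e" and G: "realizes G d" and f: "inj_on f {..<length e}"
      "f ` {..<length e} \<subseteq> {..<length d}"
      "\<forall>i < length e. \<forall>j < length e. H i j \<longleftrightarrow> G (f i) (f j)"
    using assms(3) unfolding rao_le_def by blast
  let ?U = "f ` {..<length e}" and ?V = "{..<length d}"
  have "degree_labelling G ?U f e"
    using assms(1) f(1) induced_degree_in[OF H f(1) f(3)]
    by unfold_locales (auto simp: degree_seq_def inj_on_imp_bij_betw)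
  then obtain S where S: "admissible G ?U S" "Delta_on G ?U S = Delta_star e"
    using degree_labelling.Delta_star_attained by blast
  have "symp G" "irreflp G" using G by (auto simp: realizes_def symp_def irreflp_def)
  moreover have "?U \<union> (?V - ?U) = ?V" using f(2) by blast
  ultimately obtain T where T: "admissible G ?V T" "Delta_on G ?U S \<le> Delta_on G ?V T"
    using admissible_superset[of ?U "?V - ?U" G S] S(1) by auto
  have "degree_labelling G ?V id d"
    using assms(2) realizes_degree_in[OF G] by unfold_locales (auto simp: degree_seq_def)
  then have "Delta_on G ?V T \<le> Delta_star d"
    using T(1) by (rule degree_labelling.Delta_on_le_Delta_star)
  then show ?thesis using S(2) T(2) by linarith
qed

end
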